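(* Let $m,n>-1/2$, $\alpha_1,\alpha_2>0$, $0\le|\beta_i|<\alpha_i$ ($i=1,2$), let $X\sim\mathrm{VG}(m,\alpha_1,\beta_1,0)$, $Y\sim\mathrm{VG}(n,\alpha_2,\beta_2,0)$ be independent and $Z=XY$ with density $f_Z$. Let $D=\frac{\sqrt\pi\,\gamma_1^{2m+1}\gamma_2^{2n+1}}{(2\alpha_1)^{m+1/2}(2\alpha_2)^{n+1/2}\Gamma(m+1/2)\Gamma(n+1/2)}$. Then as $z\to\infty$, \[ f_Z(z)\sim D\,z^{\frac14(2m+2n-3)}\Big((\lambda_1^-)^{\frac14(2n-2m-1)}(\lambda_2^-)^{\frac14(2m-2n-1)}e^{-2\sqrt{\lambda_1^-\lambda_2^-z}}+(\lambda_1^+)^{\frac14(2n-2m-1)}(\lambda_2^+)^{\frac14(2m-2n-1)}e^{-2\sqrt{\lambda_1^+\lambda_2^+z}}\Big), \] and as $z\to-\infty$, \[ f_Z(z)\sim D\,(-z)^{\frac14(2m+2n-3)}\Big((\lambda_1^-)^{\frac14(2n-2m-1)}(\lambda_2^+)^{\frac14(2m-2n-1)}e^{-2\sqrt{-\lambda_1^-\lambda_2^+z}}+(\lambda_1^+)^{\frac14(2n-2m-1)}(\lambda_2^-)^{\frac14(2m-2n-1)}e^{-2\sqrt{-\lambda_1^+\lambda_2^-z}}\Big). \]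
   Context: For $\mu>-1/2$, $\alpha>0$ and $0\le|\beta|<\alpha$, $\mathrm{VG}(\mu,\alpha,\beta,0)$ denotes the variance-gamma distribution on $\mathbb{R}$ with probability density function $f(x)=\frac{(\alpha^2-\beta^2)^{\mu+1/2}}{\sqrt{\pi}(2\alpha)^{\mu}\Gamma(\mu+1/2)}e^{\beta x}|x|^{\mu}K_{\mu}(\alpha|x|)$, where $K_\nu$ is the modified Bessel function of the second kind. Notation: $\gamma_i=\sqrt{\alpha_i^2-\beta_i^2}$, $\lambda_i^{\pm}=\alpha_i\pm\beta_i$. $a(z)\sim b(z)$ means $a(z)/b(z)\to1$. *)

theory Defs
  imports "HOL-Analysis.Analysis" "HOL-Library.Landau_Symbols"
begin

text \<open>Modified Bessel function of the second kind, via the standard integral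
  representation K_nu(x) = int_0^infinity exp(-x cosh t) cosh(nu t) dt, valid for x > 0.\<close>
definition besselK :: "real \<Rightarrow> real \<Rightarrow> real" where
  "besselK \<nu> x = (LBINT t:{0..}. exp (- x * cosh t) * cosh (\<nu> * t))"

definition vg_pdf :: "real \<Rightarrow> real \<Rightarrow> real \<Rightarrow> real \<Rightarrow> real" where
  "vg_pdf \<mu> \<alpha> \<beta> x =
     (\<alpha>\<^sup>2 - \<beta>\<^sup>2) powr (\<mu> + 1/2) / (sqrt pi * (2 * \<alpha>) powr \<mu> * Gamma (\<mu> + 1/2))
     * exp (\<beta> * x) * \<bar>x\<bar> powr \<mu> * besselK \<mu> (\<alpha> * \<bar>x\<bar>)"

definition product_pdf :: "(real \<Rightarrow> real) \<Rightarrow> (real \<Rightarrow> real) \<Rightarrow> real \<Rightarrow> real" where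
  "product_pdf fX fY z = (LINT x|lborel. fX x * fY (z / x) / \<bar>x\<bar>)"

end

theory Submission
  imports Defs "HOL-Probability.Distributions" "HOL-Real_Asymp.Real_Asymp"
begin

text \<open>
  For z > 0 the density of XY splits into the contributions of x > 0 and x < 0; after
  reflecting the second one, each is a constant times the integral over u > 0 of
  u^p e^(bu) K_p(au) (z/u)^q e^(dz/u) K_q(cz/u) / u. Writing K_nu(y) = e^(-y) y^(-1/2) E_nu(y),
  where E_nu(y) tends to sqrt(pi/2) by dominated convergence, the integrand is governed by
  exp (-((a-b) u + (c-d) z/u)). This phase has a saddle point at u = sqrt ((c-d) z/(a-b)) with
  value 2 sqrt ((a-b)(c-d) z), and Laplace's method there, made rigorous by dominated convergence
  in the rescaled variable, yields the exponential factor of each summand. The two summands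
  come from the two signs of x, and the tail at -infinity is the tail at +infinity with beta2
  replaced by -beta2.
\<close>


lemma borel_measurable_cosh_real [measurable]: "(cosh :: real \<Rightarrow> real) \<in> borel_measurable borel"
  by (intro borel_measurable_continuous_onI continuous_intros)

lemma square_half_le_cosh_minus_one: "t\<^sup>2 / 2 \<le> cosh t - 1" for t :: real
proof -
  have "(\<bar>t\<bar> / 2)\<^sup>2 \<le> (sinh (\<bar>t\<bar> / 2))\<^sup>2"
  proof (rule power_mono)
    show "\<bar>t\<bar> / 2 \<le> sinh (\<bar>t\<bar> / 2)"
      using real_le_x_sinh[of "\<bar>t\<bar> / 2"] by (simp add: sinh_def exp_minus)
  qed simp
  moreover have "cosh (2 * (\<bar>t\<bar> / 2)) = 1 + 2 * (sinh (\<bar>t\<bar> / 2))\<^sup>2"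
    unfolding cosh_double cosh_square_eq by simp
  ultimately show ?thesis by (simp add: power_divide)
qed

lemma cosh_le_exp_abs: "cosh x \<le> exp \<bar>x\<bar>" for x :: real
proof -
  have "cosh x = (exp \<bar>x\<bar> + exp (- \<bar>x\<bar>)) / 2"
    by (cases "x \<ge> 0") (simp_all add: cosh_field_def)
  moreover have "exp (- \<bar>x\<bar>) \<le> exp \<bar>x\<bar>" by simp
  ultimately show ?thesis by argo
qed

lemma power_div_fact_le_exp: "x \<ge> 0 \<Longrightarrow> x ^ k / fact k \<le> exp (x::real)"
  using sum_le_suminf[OF summable_exp_generic[of x], of "{k}"]
  by (simp add: exp_def divide_inverse ac_simps)

lemma powr_le_max_inverse_power:
  fixes v r :: real
  assumes "v > 0"
  shows "v powr r \<le> max v (1 / v) ^ nat \<lceil>\<bar>r\<bar>\<rceil>"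
proof -
  define M where "M = max v (1 / v)"
  have M: "M \<ge> 1" "v \<le> M" "1 / v \<le> M"
    using assms by (cases "v \<ge> 1") (auto simp: M_def le_max_iff_disj le_divide_eq)
  have "v powr r \<le> M powr \<bar>r\<bar>"
  proof (cases "v \<ge> 1")
    case True
    then show ?thesis using M by (auto intro: order.trans[OF powr_mono powr_mono2])
  next
    case False
    have "v powr r = (1 / v) powr (- r)"
      using assms by (simp add: powr_minus_divide powr_divide)
    also have "\<dots> \<le> (1 / v) powr \<bar>r\<bar>" using False assms by (intro powr_mono) auto
    also have "\<dots> \<le> M powr \<bar>r\<bar>" using M assms by (intro powr_mono2) auto
    finally show ?thesis .
  qed
  also have "\<dots> \<le> M powr nat \<lceil>\<bar>r\<bar>\<rceil>" using M by (intro powr_mono) auto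
  also have "\<dots> = M ^ nat \<lceil>\<bar>r\<bar>\<rceil>" using M by (intro powr_realpow) auto
  finally show ?thesis unfolding M_def .
qed

lemma max_inverse_power_times_exp_le_near:
  fixes v w :: real
  assumes "1/2 \<le> v" "v \<le> 1 + \<bar>w\<bar>"
  shows "max v (1 / v) ^ K * exp (- (w\<^sup>2 / v)) \<le> exp 1 * 2 ^ K * ((1 + \<bar>w\<bar> ^ K) * exp (- \<bar>w\<bar>))"
proof -
  have "1 / v \<le> 2" using assms(1) by (simp add: divide_le_eq)
  then have "max v (1 / v) \<le> 2 * max 1 \<bar>w\<bar>"
    using assms(2) max.cobounded1[of 1 "\<bar>w\<bar>"] max.cobounded2[of "\<bar>w\<bar>" 1] by linarith
  then have "max v (1 / v) ^ K \<le> (2 * max 1 \<bar>w\<bar>) ^ K"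
    using assms(1) by (intro power_mono) (auto simp: le_max_iff_disj)
  also have "\<dots> \<le> 2 ^ K * (1 + \<bar>w\<bar> ^ K)"
    unfolding power_mult_distrib by (intro mult_left_mono) (auto simp: max_def)
  finally have M: "max v (1 / v) ^ K \<le> 2 ^ K * (1 + \<bar>w\<bar> ^ K)" .
  have "\<bar>w\<bar> - 1 \<le> w\<^sup>2 / (1 + \<bar>w\<bar>)" by (simp add: field_simps power2_eq_square)
  also have "\<dots> \<le> w\<^sup>2 / v" using assms by (intro divide_left_mono) auto
  finally have "exp (- (w\<^sup>2 / v)) \<le> exp 1 * exp (- \<bar>w\<bar>)" by (simp flip: exp_add)
  then have "max v (1 / v) ^ K * exp (- (w\<^sup>2 / v)) \<le> 2 ^ K * (1 + \<bar>w\<bar> ^ K) * (exp 1 * exp (- \<bar>w\<bar>))"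
    using M by (intro mult_mono) auto
  then show ?thesis by (simp add: mult_ac)
qed

lemma max_inverse_power_times_exp_le_far:
  fixes v w :: real
  assumes "0 < v" "v < 1/2" "1/4 \<le> w\<^sup>2"
  shows "max v (1 / v) ^ K * exp (- (w\<^sup>2 / v)) \<le> exp 1 * (8 ^ K * fact K) * exp (- \<bar>w\<bar>)"
proof -
  define M where "M = max v (1 / v)"
  have "v < 1" "1 < 1 / v" using assms by auto
  then have M: "M = 1 / v" by (simp add: M_def max_def)
  have "M / 8 \<le> w\<^sup>2 / (2 * v)" using assms M by (simp add: field_simps)
  moreover have "w\<^sup>2 * (2 * v) \<le> w\<^sup>2" using assms by (intro mult_left_le) auto
  then have "w\<^sup>2 \<le> w\<^sup>2 / (2 * v)" using assms(1) by (simp add: le_divide_eq)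
  then have "\<bar>w\<bar> - 1 \<le> w\<^sup>2 / (2 * v)"
    using zero_le_power2[of "\<bar>w\<bar> - 1"] by (simp add: power2_eq_square algebra_simps)
  moreover have "w\<^sup>2 / (2 * v) + w\<^sup>2 / (2 * v) = w\<^sup>2 / v" by (simp add: field_simps)
  ultimately have "- (w\<^sup>2 / v) \<le> - (M / 8) + (1 + - \<bar>w\<bar>)" by linarith
  then have e: "exp (- (w\<^sup>2 / v)) \<le> exp (- (M / 8)) * (exp 1 * exp (- \<bar>w\<bar>))"
    by (simp only: exp_add[symmetric] exp_le_cancel_iff)
  have "(M / 8) ^ K / fact K \<le> exp (M / 8)"
    using M assms(1) by (intro power_div_fact_le_exp) auto
  then have f: "M ^ K * exp (- (M / 8)) \<le> 8 ^ K * fact K"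
    by (simp add: exp_minus field_simps power_divide)
  have "M ^ K * exp (- (w\<^sup>2 / v)) \<le> M ^ K * (exp (- (M / 8)) * (exp 1 * exp (- \<bar>w\<bar>)))"
    using e M assms(1) by (intro mult_left_mono) auto
  also have "\<dots> = (M ^ K * exp (- (M / 8))) * (exp 1 * exp (- \<bar>w\<bar>))" by (simp only: mult.assoc)
  also have "\<dots> \<le> (8 ^ K * fact K) * (exp 1 * exp (- \<bar>w\<bar>))" using f by (intro mult_right_mono) auto
  finally show ?thesis unfolding M_def by (simp add: mult_ac)
qed

text \<open>
  With v the rescaled variable of Laplace's method, this is the majorant, integrable in w and
  uniform in R, that makes dominated convergence applicable.
\<close>

lemma max_inverse_power_times_exp_le:
  fixes R v w :: real
  assumes R: "R \<ge> 1" and v: "v = 1 + w / sqrt R" "v > 0"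
  shows "max v (1 / v) ^ K * exp (- (w\<^sup>2 / v))
           \<le> exp 1 * (2 ^ K + 8 ^ K * fact K) * ((1 + \<bar>w\<bar> ^ K) * exp (- \<bar>w\<bar>))"
proof (cases "v \<ge> 1/2")
  case True
  have "\<bar>w\<bar> / sqrt R \<le> \<bar>w\<bar> / 1" using R by (intro divide_left_mono) auto
  moreover have "w / sqrt R \<le> \<bar>w\<bar> / sqrt R" using R by (intro divide_right_mono) auto
  ultimately have "v \<le> 1 + \<bar>w\<bar>" using v by linarith
  with True have "max v (1 / v) ^ K * exp (- (w\<^sup>2 / v)) \<le> exp 1 * 2 ^ K * ((1 + \<bar>w\<bar> ^ K) * exp (- \<bar>w\<bar>))"
    by (rule max_inverse_power_times_exp_le_near)
  also have "\<dots> \<le> exp 1 * (2 ^ K + 8 ^ K * fact K) * ((1 + \<bar>w\<bar> ^ K) * exp (- \<bar>w\<bar>))"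
    by (intro mult_right_mono mult_left_mono) auto
  finally show ?thesis .
next
  case False
  have "w = (v - 1) * sqrt R" using v R by (simp add: field_simps)
  then have "(1 - v) * 1 \<le> \<bar>w\<bar>" using False R by (simp add: abs_mult mult_left_mono)
  then have "(1/2)\<^sup>2 \<le> \<bar>w\<bar>\<^sup>2" using False by (intro power_mono) auto
  then have "max v (1 / v) ^ K * exp (- (w\<^sup>2 / v)) \<le> exp 1 * (8 ^ K * fact K) * exp (- \<bar>w\<bar>)"
    using False v(2) by (intro max_inverse_power_times_exp_le_far) (auto simp: power_divide)
  also have "\<dots> \<le> exp 1 * (2 ^ K + 8 ^ K * fact K) * ((1 + \<bar>w\<bar> ^ K) * exp (- \<bar>w\<bar>))"
    by (intro mult_mono) auto
  finally show ?thesis .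
qed

lemma has_bochner_integral_gaussian_half_line:
  assumes "s > 0"
  shows "has_bochner_integral lborel (\<lambda>w. indicator {0..} w * exp (- (w / s)\<^sup>2)) (s * sqrt pi / 2)"
proof -
  have "has_bochner_integral lborel (\<lambda>w. indicator {0..} (0 + (1/s) * w) *\<^sub>R exp (- (0 + (1/s) * w)\<^sup>2))
          ((sqrt pi / 2) /\<^sub>R \<bar>1/s\<bar>)"
    using gaussian_moment_0 assms
      lborel_has_bochner_integral_real_affine_iff[of "1/s" "\<lambda>x. indicator {0..} x *\<^sub>R exp (- x\<^sup>2)" "sqrt pi / 2" 0]
    by simp
  moreover have "indicator {0..} ((1/s) * w) = (indicator {0..} w :: real)" for w
    using assms by (auto simp: indicator_def zero_le_divide_iff)
  ultimately show ?thesis using assms by simp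
qed

lemma has_bochner_integral_gaussian: "has_bochner_integral lborel (\<lambda>w. exp (- w\<^sup>2)) (sqrt pi)"
proof -
  have "normal_density 0 (1 / sqrt 2) = (\<lambda>w. exp (- w\<^sup>2) / sqrt pi)"
    unfolding normal_density_def by (simp add: power_divide)
  moreover have "has_bochner_integral lborel (normal_density 0 (1 / sqrt 2)) 1"
    using integrable_normal_density[of "1 / sqrt 2" 0] integral_normal_density[of "1 / sqrt 2" 0]
    by (simp add: has_bochner_integral_iff)
  ultimately have "has_bochner_integral lborel (\<lambda>w. exp (- w\<^sup>2) / sqrt pi) 1" by simp
  from has_bochner_integral_mult_left[OF this, of "sqrt pi"] show ?thesis by simp
qed

lemma integrable_power_times_exp_half_line:
  "integrable lborel (\<lambda>x::real. indicator {0..} x * (x ^ k * exp (- x)))"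
proof (rule integrableI_nonneg)
  have "(\<integral>\<^sup>+x. ennreal (indicator {0..} x * (x ^ k * exp (- x))) \<partial>lborel) =
        (\<integral>\<^sup>+x. ennreal (x ^ k * exp (- x)) * indicator {0..} x \<partial>lborel)"
    by (intro nn_integral_cong) (auto simp: indicator_def)
  also have "\<dots> = real_of_nat (fact k)" by (rule nn_intergal_power_times_exp_Ici)
  finally show "(\<integral>\<^sup>+x. ennreal (indicator {0..} x * (x ^ k * exp (- x))) \<partial>lborel) < \<infinity>" by simp
qed (auto simp: indicator_def)

lemma integrable_power_abs_times_exp: "integrable lborel (\<lambda>w::real. (1 + \<bar>w\<bar> ^ K) * exp (- \<bar>w\<bar>))"
proof -
  let ?g = "\<lambda>x::real. indicator {0..} x * (x ^ 0 * exp (- x)) + indicator {0..} x * (x ^ K * exp (- x))"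
  have g: "integrable lborel ?g"
    by (intro Bochner_Integration.integrable_add integrable_power_times_exp_half_line)
  then have "integrable lborel (\<lambda>x. ?g x + ?g (0 + (-1) * x))"
    using lborel_integrable_real_affine[OF g, of "-1" 0] by simp
  then show ?thesis
  proof (rule Bochner_Integration.integrable_bound)
    show "AE x in lborel. norm ((1 + \<bar>x\<bar> ^ K) * exp (- \<bar>x\<bar>)) \<le> norm (?g x + ?g (0 + (-1) * x))"
    proof (rule AE_I2)
      fix x :: real
      have "norm ((1 + \<bar>x\<bar> ^ K) * exp (- \<bar>x\<bar>)) = (1 + \<bar>x\<bar> ^ K) * exp (- \<bar>x\<bar>)"
        by (simp add: abs_mult)
      also have "\<dots> \<le> ?g x + ?g (- x)"
        by (cases "x \<ge> 0") (auto simp: indicator_def algebra_simps)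
      also have "\<dots> \<le> norm (?g x + ?g (0 + (-1) * x))" by simp
      finally show "norm ((1 + \<bar>x\<bar> ^ K) * exp (- \<bar>x\<bar>)) \<le> norm (?g x + ?g (0 + (-1) * x))" .
    qed
  qed measurable
qed

lemma asymp_equiv_add_nonneg:
  fixes f1 f2 g1 g2 :: "'a \<Rightarrow> real"
  assumes "f1 \<sim>[F] g1" "f2 \<sim>[F] g2" "\<forall>\<^sub>F x in F. g1 x \<ge> 0" "\<forall>\<^sub>F x in F. g2 x \<ge> 0"
  shows "(\<lambda>x. f1 x + f2 x) \<sim>[F] (\<lambda>x. g1 x + g2 x)"
proof -
  have "g1 \<in> O[F](\<lambda>x. g1 x + g2 x)" "g2 \<in> O[F](\<lambda>x. g1 x + g2 x)"
    using assms(3,4) by (auto intro!: bigoI[where c = 1] elim: eventually_elim2)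
  then have "(\<lambda>x. f1 x - g1 x) \<in> o[F](\<lambda>x. g1 x + g2 x)" "(\<lambda>x. f2 x - g2 x) \<in> o[F](\<lambda>x. g1 x + g2 x)"
    using assms(1,2) unfolding asymp_equiv_altdef by (auto intro: landau_o.small_big_trans)
  from sum_in_smallo(1)[OF this] show ?thesis
    unfolding asymp_equiv_altdef by (simp add: algebra_simps)
qed

section \<open>The exponentially scaled Bessel function\<close>

lemma borel_measurable_besselK [measurable]: "besselK \<nu> \<in> borel_measurable borel"
  unfolding besselK_def set_lebesgue_integral_def by measurable

lemma besselK_nonneg: "besselK \<nu> y \<ge> 0"
  unfolding besselK_def set_lebesgue_integral_def
  by (intro integral_nonneg_AE AE_I2) (auto simp: indicator_def)

definition besselK_scaled :: "real \<Rightarrow> real \<Rightarrow> real" where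
  "besselK_scaled \<nu> y = exp y * sqrt y * besselK \<nu> y"

definition besselK_scaled_integrand :: "real \<Rightarrow> real \<Rightarrow> real \<Rightarrow> real" where
  "besselK_scaled_integrand \<nu> y w =
     indicator {0..} w * (exp (- (y * (cosh (w / sqrt y) - 1))) * cosh (\<nu> * w / sqrt y))"

lemma borel_measurable_besselK_scaled [measurable]: "besselK_scaled \<nu> \<in> borel_measurable borel"
  unfolding besselK_scaled_def by measurable

lemma borel_measurable_besselK_scaled_integrand [measurable]:
  "besselK_scaled_integrand \<nu> y \<in> borel_measurable borel"
  unfolding besselK_scaled_integrand_def by measurable

lemma besselK_scaled_nonneg: "y \<ge> 0 \<Longrightarrow> besselK_scaled \<nu> y \<ge> 0"
  unfolding besselK_scaled_def using besselK_nonneg by simp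

lemma besselK_scaled_integrand_nonneg: "besselK_scaled_integrand \<nu> y w \<ge> 0"
  unfolding besselK_scaled_integrand_def by (auto simp: indicator_def)

lemma besselK_scaled_eq_integral:
  assumes "y > 0"
  shows "besselK_scaled \<nu> y = (LINT w|lborel. besselK_scaled_integrand \<nu> y w)"
proof -
  let ?f = "\<lambda>t. indicator {0..} t * (exp (- y * cosh t) * cosh (\<nu> * t)) :: real"
  have s: "sqrt y > 0" using assms by simp
  have "besselK \<nu> y = (LINT t|lborel. ?f t)"
    unfolding besselK_def set_lebesgue_integral_def by simp
  also have "\<dots> = (1 / sqrt y) * (LINT w|lborel. ?f (0 + (1 / sqrt y) * w))"
    using lborel_integral_real_affine[of "1 / sqrt y" ?f 0] s by simp
  finally have "besselK_scaled \<nu> y = (LINT w|lborel. exp y * ?f (w / sqrt y))"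
    unfolding besselK_scaled_def using s by simp
  also have "\<dots> = (LINT w|lborel. besselK_scaled_integrand \<nu> y w)"
  proof (intro Bochner_Integration.integral_cong refl)
    fix w
    have "indicator {0..} (w / sqrt y) = (indicator {0..} w :: real)"
      using s by (auto simp: indicator_def zero_le_divide_iff)
    moreover have "exp y * exp (- y * cosh (w / sqrt y)) = exp (- (y * (cosh (w / sqrt y) - 1)))"
      by (simp add: exp_add[symmetric] algebra_simps)
    ultimately show "exp y * ?f (w / sqrt y) = besselK_scaled_integrand \<nu> y w"
      unfolding besselK_scaled_integrand_def by (simp add: field_simps)
  qed
  finally show ?thesis .
qed

lemma besselK_scaled_integrand_le:
  assumes y: "y \<ge> 1"
  shows "besselK_scaled_integrand \<nu> y w \<le> exp (\<nu>\<^sup>2) * (indicator {0..} w * exp (- (w / 2)\<^sup>2))"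
proof (cases "w \<ge> 0")
  case False then show ?thesis by (simp add: besselK_scaled_integrand_def)
next
  case w: True
  have sy: "sqrt y \<ge> 1" using y by simp
  have "y * ((w / sqrt y)\<^sup>2 / 2) \<le> y * (cosh (w / sqrt y) - 1)"
    using y square_half_le_cosh_minus_one by (intro mult_left_mono) auto
  moreover have "y * ((w / sqrt y)\<^sup>2 / 2) = w\<^sup>2 / 2" using y by (simp add: power_divide)
  ultimately have e1: "exp (- (y * (cosh (w / sqrt y) - 1))) \<le> exp (- (w\<^sup>2 / 2))" by simp
  have "\<bar>\<nu> * w / sqrt y\<bar> = \<bar>\<nu>\<bar> * w / sqrt y" using w sy by (simp add: abs_mult)
  also have "\<dots> \<le> \<bar>\<nu>\<bar> * w / 1" using sy w by (intro divide_left_mono) auto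
  finally have "cosh \<bar>\<nu> * w / sqrt y\<bar> \<le> cosh (\<bar>\<nu>\<bar> * w)"
    using w by (subst cosh_real_nonneg_le_iff) auto
  then have "cosh (\<nu> * w / sqrt y) \<le> cosh (\<bar>\<nu>\<bar> * w)" by (simp only: cosh_real_abs)
  also have "\<dots> \<le> exp (\<bar>\<nu>\<bar> * w)" using cosh_le_exp_abs[of "\<bar>\<nu>\<bar> * w"] w by simp
  finally have e2: "cosh (\<nu> * w / sqrt y) \<le> exp (\<bar>\<nu>\<bar> * w)" .
  have "besselK_scaled_integrand \<nu> y w \<le> exp (- (w\<^sup>2 / 2)) * exp (\<bar>\<nu>\<bar> * w)"
    unfolding besselK_scaled_integrand_def using w e1 e2 by (auto intro!: mult_mono)
  also have "\<dots> = exp (- (w\<^sup>2 / 2) + \<bar>\<nu>\<bar> * w)" by (simp only: exp_add)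
  also have "\<dots> \<le> exp (\<nu>\<^sup>2 - (w / 2)\<^sup>2)"
    using zero_le_power2[of "w / 2 - \<bar>\<nu>\<bar>"] by (simp add: power2_eq_square algebra_simps)
  also have "\<dots> = exp (\<nu>\<^sup>2) * (indicator {0..} w * exp (- (w / 2)\<^sup>2))"
    using w by (simp only: diff_conv_add_uminus exp_add) simp
  finally show ?thesis .
qed

lemma integrable_besselK_scaled_integrand:
  assumes "y \<ge> 1"
  shows "integrable lborel (besselK_scaled_integrand \<nu> y)"
proof (rule Bochner_Integration.integrable_bound)
  show "integrable lborel (\<lambda>w. exp (\<nu>\<^sup>2) * (indicator {0..} w * exp (- (w / 2)\<^sup>2)) :: real)"
    using integrable.intros[OF has_bochner_integral_gaussian_half_line, of 2] by simp
  show "AE w in lborel. norm (besselK_scaled_integrand \<nu> y w)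
          \<le> norm (exp (\<nu>\<^sup>2) * (indicator {0..} w * exp (- (w / 2)\<^sup>2)) :: real)"
    using assms besselK_scaled_integrand_le[OF assms]
    by (intro AE_I2) (simp add: besselK_scaled_integrand_nonneg)
qed measurable

lemma besselK_scaled_integrand_tendsto:
  "((\<lambda>y. besselK_scaled_integrand \<nu> y w) \<longlongrightarrow> indicator {0..} w * exp (- (w / sqrt 2)\<^sup>2)) at_top"
proof -
  have "((\<lambda>y. exp (- (y * (cosh (w / sqrt y) - 1))) * cosh (\<nu> * w / sqrt y)) \<longlongrightarrow> exp (- (w * w / 2))) at_top"
    by real_asymp
  then show ?thesis
    unfolding besselK_scaled_integrand_def by (intro tendsto_mult_left) (simp add: power_divide power2_eq_square)
qed

lemma besselK_scaled_tendsto: "(besselK_scaled \<nu> \<longlongrightarrow> sqrt (pi / 2)) at_top"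
proof -
  let ?g = "\<lambda>w. exp (\<nu>\<^sup>2) * (indicator {0..} w * exp (- (w / 2)\<^sup>2)) :: real"
  let ?h = "\<lambda>w. indicator {0..} w * exp (- (w / sqrt 2)\<^sup>2) :: real"
  have "((\<lambda>y. LINT w|lborel. besselK_scaled_integrand \<nu> y w) \<longlongrightarrow> (LINT w|lborel. ?h w)) at_top"
  proof (rule integral_dominated_convergence_at_top[where w = ?g])
    show "integrable lborel ?g"
      using integrable.intros[OF has_bochner_integral_gaussian_half_line, of 2] by simp
    show "\<forall>\<^sub>F y in at_top. AE w in lborel. norm (besselK_scaled_integrand \<nu> y w) \<le> ?g w"
      using eventually_ge_at_top[of "1::real"]
      by eventually_elim (simp add: besselK_scaled_integrand_nonneg besselK_scaled_integrand_le)
    show "AE w in lborel. ((\<lambda>y. besselK_scaled_integrand \<nu> y w) \<longlongrightarrow> ?h w) at_top"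
      by (intro AE_I2 besselK_scaled_integrand_tendsto)
  qed measurable
  moreover have "(LINT w|lborel. ?h w) = sqrt 2 * sqrt pi / 2"
    by (rule has_bochner_integral_integral_eq, rule has_bochner_integral_gaussian_half_line) simp
  moreover have "sqrt 2 * sqrt pi / 2 = sqrt (pi / 2)"
  proof -
    have "sqrt 2 * sqrt 2 = (2::real)" by simp
    then show ?thesis by (simp add: real_sqrt_divide field_simps)
  qed
  moreover have "\<forall>\<^sub>F y in at_top. (LINT w|lborel. besselK_scaled_integrand \<nu> y w) = besselK_scaled \<nu> y"
    using eventually_gt_at_top[of "0::real"] by eventually_elim (simp add: besselK_scaled_eq_integral)
  ultimately show ?thesis using Lim_transform_eventually by metis
qed

lemma exp_neg_mult_cosh_le:
  fixes y t :: real
  assumes "y > 0" "t \<ge> 0"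
  shows "exp (- y * cosh t) \<le> fact k * (2 / y) ^ k * exp (- (k * t))"
proof -
  have "exp (- y * cosh t) \<le> exp (- (y * exp t / 2))"
    using assms cosh_def[of t] by (simp add: mult_left_mono)
  also have "\<dots> \<le> fact k / (y * exp t / 2) ^ k"
    using power_div_fact_le_exp[of "y * exp t / 2" k] assms by (simp add: exp_minus field_simps)
  also have "\<dots> = fact k * (2 / y) ^ k * exp (- (k * t))"
    by (simp add: power_divide power_mult_distrib exp_of_nat_mult[symmetric] exp_minus field_simps)
  finally show ?thesis .
qed

lemma besselK_le_inverse_power: "\<exists>C (k::nat). \<forall>y>0. besselK \<nu> y \<le> C * (1 / y) ^ k"
proof -
  define k where "k = Suc (nat \<lceil>\<bar>\<nu>\<bar>\<rceil>)"
  have k: "real k \<ge> \<bar>\<nu>\<bar> + 1" unfolding k_def by linarith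
  let ?g = "\<lambda>t. indicator {0..} t * exp (- t) :: real"
  have g: "integrable lborel ?g"
    using integrable_power_times_exp_half_line[of 0] by simp
  have "besselK \<nu> y \<le> (fact k * 2 ^ k * (LINT t|lborel. ?g t)) * (1 / y) ^ k" if y: "y > 0" for y
  proof -
    let ?f = "\<lambda>t. indicator {0..} t * (exp (- y * cosh t) * cosh (\<nu> * t)) :: real"
    let ?c = "fact k * (2 / y) ^ k :: real"
    have c: "?c \<ge> 0" using y by simp
    have bound: "?f t \<le> ?c * ?g t" for t
    proof (cases "t \<ge> 0")
      case t: True
      have "exp (- y * cosh t) * cosh (\<nu> * t) \<le> ?c * exp (- (k * t)) * exp (\<bar>\<nu>\<bar> * t)"
        using exp_neg_mult_cosh_le[OF y t] cosh_le_exp_abs[of "\<nu> * t"] t c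
        by (intro mult_mono) (auto simp: abs_mult)
      also have "\<dots> = ?c * exp (- (k * t) + \<bar>\<nu>\<bar> * t)"
        by (simp only: exp_add mult.assoc)
      also have "\<dots> \<le> ?c * exp (- t)"
      proof (rule mult_left_mono)
        have "t * (1 + \<bar>\<nu>\<bar>) \<le> t * k" using k t by (intro mult_left_mono) auto
        then show "exp (- (k * t) + \<bar>\<nu>\<bar> * t) \<le> exp (- t)" by (simp add: algebra_simps)
      qed (rule c)
      finally show ?thesis using t by simp
    qed simp
    have f_nonneg: "?f t \<ge> 0" for t by simp
    have "integrable lborel ?f"
    proof (rule Bochner_Integration.integrable_bound)
      show "integrable lborel (\<lambda>t. ?c * ?g t)" using g by simp
      show "AE t in lborel. norm (?f t) \<le> norm (?c * ?g t)"
        using bound f_nonneg by (intro AE_I2) (metis abs_of_nonneg order.trans real_norm_def)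
    qed measurable
    then have "besselK \<nu> y \<le> (LINT t|lborel. ?c * ?g t)"
      unfolding besselK_def set_lebesgue_integral_def using bound g by (intro integral_mono) auto
    also have "\<dots> = (fact k * 2 ^ k * (LINT t|lborel. ?g t)) * (1 / y) ^ k"
      by (simp add: power_divide)
    finally show ?thesis .
  qed
  then show ?thesis by blast
qed

lemma besselK_scaled_le_const: "\<exists>C. \<forall>y\<ge>1. besselK_scaled \<nu> y \<le> C"
proof -
  let ?g = "\<lambda>w. exp (\<nu>\<^sup>2) * (indicator {0..} w * exp (- (w / 2)\<^sup>2)) :: real"
  have "besselK_scaled \<nu> y \<le> (LINT w|lborel. ?g w)" if "y \<ge> 1" for y
    unfolding besselK_scaled_eq_integral[of y, OF order.strict_trans2[OF zero_less_one that]]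
    using that integrable_besselK_scaled_integrand besselK_scaled_integrand_le
      integrable.intros[OF has_bochner_integral_gaussian_half_line, of 2]
    by (intro integral_mono) auto
  then show ?thesis by blast
qed

lemma besselK_scaled_bound: "\<exists>C (k::nat). \<forall>y>0. besselK_scaled \<nu> y \<le> C * (1 + 1 / y) ^ k"
proof -
  obtain C1 where C1: "\<And>y. y \<ge> 1 \<Longrightarrow> besselK_scaled \<nu> y \<le> C1"
    using besselK_scaled_le_const by blast
  obtain C2 and k :: nat where C2: "\<And>y. 0 < y \<Longrightarrow> besselK \<nu> y \<le> C2 * (1 / y) ^ k"
    using besselK_le_inverse_power by blast
  define C where "C = max C1 0 + exp 1 * max C2 0"
  have "0 \<le> exp 1 * max C2 0" by simp
  then have C: "C1 \<le> C" "exp 1 * max C2 0 \<le> C" "0 \<le> C"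
    unfolding C_def using max.cobounded1[of C1 0] max.cobounded2[of 0 C1] by linarith+
  have "besselK_scaled \<nu> y \<le> C * (1 + 1 / y) ^ k" if y: "y > 0" for y
  proof (cases "y \<ge> 1")
    case True
    have "besselK_scaled \<nu> y \<le> C * 1" using C1[OF True] C by simp
    also have "\<dots> \<le> C * (1 + 1 / y) ^ k"
      using y C by (intro mult_left_mono) auto
    finally show ?thesis .
  next
    case False
    have "besselK_scaled \<nu> y \<le> exp 1 * 1 * (max C2 0 * (1 / y) ^ k)"
      unfolding besselK_scaled_def using False y C2[OF y] besselK_nonneg[of \<nu> y]
      by (intro mult_mono) (auto intro: order.trans[OF _ mult_right_mono[OF max.cobounded1]])
    also have "\<dots> = (exp 1 * max C2 0) * (1 / y) ^ k" by simp
    also have "\<dots> \<le> C * (1 + 1 / y) ^ k"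
    proof (rule mult_mono)
      show "(1 / y) ^ k \<le> (1 + 1 / y) ^ k" using y by (intro power_mono) auto
    qed (use C y in auto)
    finally show ?thesis .
  qed
  then show ?thesis by blast
qed

lemma besselK_scaled_le_max_power:
  assumes "\<And>y. y > 0 \<Longrightarrow> besselK_scaled \<nu> y \<le> C * (1 + 1 / y) ^ k" "C \<ge> 0"
    and "y > 0" "1 \<le> M" "1 / y \<le> e * M"
  shows "besselK_scaled \<nu> y \<le> C * (1 + e) ^ k * M ^ k"
proof -
  have "(1 + 1 / y) ^ k \<le> ((1 + e) * M) ^ k"
    using assms(3-5) by (intro power_mono) (auto simp: algebra_simps)
  then have "besselK_scaled \<nu> y \<le> C * ((1 + e) * M) ^ k"
    using assms(1)[OF assms(3)] assms(2) by (meson mult_left_mono order.trans)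
  then show ?thesis by (simp add: power_mult_distrib mult.assoc)
qed

section \<open>Laplace's method for products of Bessel kernels\<close>

definition pos_product_integrand :: "(real \<Rightarrow> real) \<Rightarrow> (real \<Rightarrow> real) \<Rightarrow> real \<Rightarrow> real \<Rightarrow> real" where
  "pos_product_integrand fX fY z u = indicator {0<..} u * (fX u * fY (z / u) / u)"

lemma product_pdf_split:
  assumes "integrable lborel (pos_product_integrand fX fY z)"
    and "integrable lborel (pos_product_integrand (\<lambda>x. fX (- x)) (\<lambda>y. fY (- y)) z)"
  shows "product_pdf fX fY z = (LINT u|lborel. pos_product_integrand fX fY z u)
           + (LINT u|lborel. pos_product_integrand (\<lambda>x. fX (- x)) (\<lambda>y. fY (- y)) z u)"
proof -
  let ?F = "pos_product_integrand fX fY z"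
  let ?G = "pos_product_integrand (\<lambda>x. fX (- x)) (\<lambda>y. fY (- y)) z"
  have split: "fX x * fY (z / x) / \<bar>x\<bar> = ?F x + ?G (0 + (-1) * x)" for x
    by (cases x "0::real" rule: linorder_cases) (simp_all add: pos_product_integrand_def)
  have "integrable lborel (\<lambda>x. ?G (0 + (-1) * x))"
    using lborel_integrable_real_affine[OF assms(2), of "-1" 0] by simp
  moreover have "(LINT x|lborel. ?G (0 + (-1) * x)) = (LINT u|lborel. ?G u)"
    using lborel_integral_real_affine[of "-1" ?G 0] by simp
  ultimately show ?thesis
    unfolding product_pdf_def split using assms(1) by simp
qed

lemma product_pdf_uminus: "product_pdf fX fY (- z) = product_pdf fX (\<lambda>y. fY (- y)) z"
  by (simp add: product_pdf_def)

definition vg_kernel :: "real \<Rightarrow> real \<Rightarrow> real \<Rightarrow> real \<Rightarrow> real" where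
  "vg_kernel \<mu> \<alpha> \<beta> u = u powr \<mu> * exp (\<beta> * u) * besselK \<mu> (\<alpha> * u)"

lemma vg_kernel_eq_besselK_scaled:
  assumes "\<alpha> > 0" "u > 0"
  shows "vg_kernel \<mu> \<alpha> \<beta> u =
    u powr (\<mu> - 1/2) * exp (- ((\<alpha> - \<beta>) * u)) * besselK_scaled \<mu> (\<alpha> * u) / sqrt \<alpha>"
proof -
  have "sqrt (\<alpha> * u) = sqrt \<alpha> * u powr (1/2)"
    using assms by (simp add: real_sqrt_mult powr_half_sqrt)
  moreover have "u powr \<mu> = u powr (\<mu> - 1/2) * u powr (1/2)"
    by (simp flip: powr_add)
  moreover have "exp (\<beta> * u) = exp (- ((\<alpha> - \<beta>) * u)) * exp (\<alpha> * u)"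
    by (simp flip: exp_add add: algebra_simps)
  ultimately show ?thesis
    using assms unfolding vg_kernel_def besselK_scaled_def by (simp add: field_simps)
qed

lemma powr_rescale_eq:
  fixes s v z p q :: real
  assumes "s > 0" "v > 0" "z > 0"
  shows "(s * v) powr (p - 1/2) * (z / (s * v)) powr (q - 1/2) / (s * v) * s
           = s powr (p - q) * z powr (q - 1/2) * v powr (p - q - 1)"
  using assms
  by (subst ln_inj_iff[symmetric]) (simp_all add: ln_mult ln_div algebra_simps del: ln_inj_iff)

text \<open>
  The phase (a - b) u + (c - d) z / u of kernel_integrand z is minimal at u = centre z, where it
  equals 2 * rate z. The substitution u = centre z * shift z w zooms into a window of relative
  width 1 / sqrt (rate z) around that point.
\<close>

locale vg_kernel_product =
  fixes p a b q c d :: real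
  assumes a_pos: "a > 0" and c_pos: "c > 0" and b_less: "b < a" and d_less: "d < c"
begin

abbreviation kernel_integrand :: "real \<Rightarrow> real \<Rightarrow> real" where
  "kernel_integrand \<equiv> pos_product_integrand (vg_kernel p a b) (vg_kernel q c d)"

definition centre :: "real \<Rightarrow> real" where
  "centre z = sqrt ((c - d) * z / (a - b))"

definition rate :: "real \<Rightarrow> real" where
  "rate z = sqrt ((a - b) * (c - d) * z)"

definition shift :: "real \<Rightarrow> real \<Rightarrow> real" where
  "shift z w = 1 + w / sqrt (rate z)"

definition prefactor :: "real \<Rightarrow> real" where
  "prefactor z = centre z powr (p - q) * z powr (q - 1/2) * exp (- 2 * rate z) / sqrt (a * c * rate z)"

definition rescaled_integrand :: "real \<Rightarrow> real \<Rightarrow> real" where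
  "rescaled_integrand z w = indicator {0<..} (shift z w) *
     (shift z w powr (p - q - 1) * exp (- (w\<^sup>2 / shift z w))
      * besselK_scaled p (a * (centre z * shift z w))
      * besselK_scaled q (c * (z / (centre z * shift z w))))"

lemma borel_measurable_rescaled_integrand [measurable]:
  "rescaled_integrand z \<in> borel_measurable borel"
  unfolding rescaled_integrand_def shift_def by measurable

lemma centre_pos: "z > 0 \<Longrightarrow> centre z > 0"
  and rate_pos: "z > 0 \<Longrightarrow> rate z > 0"
  using b_less d_less by (simp_all add: centre_def rate_def)

lemma rate_eq_centre:
  assumes z: "z > 0"
  shows "(a - b) * centre z = rate z" and "(c - d) * (z / centre z) = rate z"
proof -
  have ab: "a - b = sqrt ((a - b)\<^sup>2)" and cd: "(c - d) * z = sqrt (((c - d) * z)\<^sup>2)"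
    using b_less d_less z by simp_all
  have "(a - b)\<^sup>2 * ((c - d) * z / (a - b)) = (a - b) * (c - d) * z"
    using b_less by (simp add: power2_eq_square)
  then show "(a - b) * centre z = rate z"
    unfolding centre_def rate_def by (subst ab) (simp only: real_sqrt_mult[symmetric])
  have "(c - d) * z / (a - b) * ((a - b) * (c - d) * z) = ((c - d) * z)\<^sup>2"
    using b_less by (simp add: power2_eq_square)
  then have "centre z * rate z = (c - d) * z"
    unfolding centre_def rate_def by (subst cd) (simp only: real_sqrt_mult[symmetric])
  then show "(c - d) * (z / centre z) = rate z"
    using centre_pos[OF z] by (simp add: field_simps)
qed

lemma phase_eq:
  assumes z: "z > 0" and v: "shift z w > 0"
  shows "(a - b) * (centre z * shift z w) + (c - d) * (z / (centre z * shift z w))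
           = 2 * rate z + w\<^sup>2 / shift z w"
proof -
  let ?v = "shift z w" and ?R = "rate z"
  have "(a - b) * (centre z * ?v) = ?R * ?v"
    using rate_eq_centre(1)[OF z] by (simp only: mult.assoc[symmetric])
  moreover have "(c - d) * (z / (centre z * ?v)) = ?R / ?v"
    using rate_eq_centre(2)[OF z] by (simp only: divide_divide_eq_left[symmetric] times_divide_eq_right)
  moreover have "?R * (?v - 1)\<^sup>2 = w\<^sup>2"
    using rate_pos[OF z] by (simp add: shift_def power_divide)
  ultimately show ?thesis using v by (simp add: field_simps power2_eq_square)
qed

lemma rescaled_integrand_eq:
  assumes z: "z > 0"
  shows "centre z / sqrt (rate z) * kernel_integrand z (centre z + centre z / sqrt (rate z) * w)
           = prefactor z * rescaled_integrand z w"
proof -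
  let ?s = "centre z" and ?R = "rate z" and ?v = "shift z w"
  have s: "?s > 0" and R: "?R > 0" using centre_pos[OF z] rate_pos[OF z] .
  have u: "?s + ?s / sqrt ?R * w = ?s * ?v" by (simp add: shift_def algebra_simps)
  show ?thesis
  proof (cases "?v > 0")
    case False
    then have "\<not> ?s * ?v > 0" using s by (simp add: zero_less_mult_iff)
    then show ?thesis
      using False unfolding u pos_product_integrand_def rescaled_integrand_def by simp
  next
    case v: True
    let ?u = "?s * ?v" and ?y = "z / (?s * ?v)"
    have u_pos: "?u > 0" and y_pos: "?y > 0" using s v z by simp_all
    have powers: "?u powr (p - 1/2) * ?y powr (q - 1/2) / ?u * ?s
        = ?s powr (p - q) * z powr (q - 1/2) * ?v powr (p - q - 1)"
      by (rule powr_rescale_eq[OF s v z])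
    have "- ((a - b) * ?u) + - ((c - d) * ?y) = - 2 * ?R + - (w\<^sup>2 / ?v)"
      using phase_eq[OF z v] by linarith
    then have exps: "exp (- ((a - b) * ?u)) * exp (- ((c - d) * ?y)) = exp (- 2 * ?R) * exp (- (w\<^sup>2 / ?v))"
      by (simp only: exp_add[symmetric])
    have "?s / sqrt ?R * kernel_integrand z ?u
        = (?u powr (p - 1/2) * ?y powr (q - 1/2) / ?u * ?s)
          * (exp (- ((a - b) * ?u)) * exp (- ((c - d) * ?y)))
          * besselK_scaled p (a * ?u) * besselK_scaled q (c * ?y) / (sqrt a * sqrt c * sqrt ?R)"
      using u_pos y_pos
      unfolding pos_product_integrand_def vg_kernel_eq_besselK_scaled[OF a_pos u_pos]
        vg_kernel_eq_besselK_scaled[OF c_pos y_pos]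
      by (simp add: field_simps)
    also have "\<dots> = prefactor z * rescaled_integrand z w"
      unfolding powers exps prefactor_def rescaled_integrand_def
      using v a_pos c_pos R by (simp add: real_sqrt_mult field_simps)
    finally show ?thesis unfolding u .
  qed
qed

lemma integral_kernel_integrand_eq:
  assumes z: "z > 0"
  shows "(LINT u|lborel. kernel_integrand z u) = prefactor z * (LINT w|lborel. rescaled_integrand z w)"
    and "integrable lborel (rescaled_integrand z) \<Longrightarrow> integrable lborel (kernel_integrand z)"
proof -
  let ?A = "centre z" and ?B = "centre z / sqrt (rate z)"
  have B: "?B > 0" using centre_pos[OF z] rate_pos[OF z] by simp
  have "(LINT u|lborel. kernel_integrand z u) = \<bar>?B\<bar> *\<^sub>R (LINT w|lborel. kernel_integrand z (?A + ?B * w))"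
    using B centre_pos[OF z] rate_pos[OF z] by (intro lborel_integral_real_affine) simp
  also have "\<dots> = (LINT w|lborel. ?B * kernel_integrand z (?A + ?B * w))"
    by (simp only: real_scaleR_def abs_of_pos[OF B] integral_mult_right_zero)
  also have "\<dots> = prefactor z * (LINT w|lborel. rescaled_integrand z w)"
    by (simp only: rescaled_integrand_eq[OF z] integral_mult_right_zero)
  finally show "(LINT u|lborel. kernel_integrand z u) = prefactor z * (LINT w|lborel. rescaled_integrand z w)" .
  assume "integrable lborel (rescaled_integrand z)"
  then have "integrable lborel (\<lambda>w. prefactor z * rescaled_integrand z w)" by simp
  then have "integrable lborel (\<lambda>w. ?B * kernel_integrand z (?A + ?B * w))"
    by (simp only: rescaled_integrand_eq[OF z])
  then have "integrable lborel (\<lambda>w. kernel_integrand z (?A + ?B * w))"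
    using B centre_pos[OF z] rate_pos[OF z] by (simp only: integrable_mult_left_iff) simp
  then show "integrable lborel (kernel_integrand z)"
    using lborel_integrable_real_affine_iff[of ?B "kernel_integrand z" ?A] B centre_pos[OF z] rate_pos[OF z]
    by auto
qed

lemma rescaled_integrand_tendsto: "((\<lambda>z. rescaled_integrand z w) \<longlongrightarrow> exp (- w\<^sup>2) * (pi / 2)) at_top"
proof -
  have shift: "((\<lambda>z. shift z w) \<longlongrightarrow> 1) at_top"
    unfolding shift_def rate_def using b_less d_less by real_asymp
  have arg1: "filterlim (\<lambda>z. a * (centre z * shift z w)) at_top at_top"
    unfolding shift_def rate_def centre_def using a_pos b_less d_less by real_asymp
  have arg2: "filterlim (\<lambda>z. c * (z / (centre z * shift z w))) at_top at_top"
    unfolding shift_def rate_def centre_def using c_pos b_less d_less by real_asymp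
  have lim: "((\<lambda>z. shift z w powr (p - q - 1) * exp (- (w\<^sup>2 / shift z w))
          * besselK_scaled p (a * (centre z * shift z w))
          * besselK_scaled q (c * (z / (centre z * shift z w))))
        \<longlongrightarrow> 1 powr (p - q - 1) * exp (- (w\<^sup>2 / 1)) * sqrt (pi / 2) * sqrt (pi / 2)) at_top"
    by (intro tendsto_intros shift filterlim_compose[OF besselK_scaled_tendsto arg1]
          filterlim_compose[OF besselK_scaled_tendsto arg2]) auto
  have "\<forall>\<^sub>F z in at_top. shift z w > 0"
    using order_tendstoD(1)[OF shift, of 0] by simp
  then have ev: "\<forall>\<^sub>F z in at_top. shift z w powr (p - q - 1) * exp (- (w\<^sup>2 / shift z w))
          * besselK_scaled p (a * (centre z * shift z w))
          * besselK_scaled q (c * (z / (centre z * shift z w))) = rescaled_integrand z w"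
    by eventually_elim (simp add: rescaled_integrand_def mult.assoc)
  show ?thesis using Lim_transform_eventually[OF lim ev] by (simp add: mult.assoc)
qed

lemma rescaled_integrand_nonneg: "z > 0 \<Longrightarrow> rescaled_integrand z w \<ge> 0"
  unfolding rescaled_integrand_def using centre_pos[of z] a_pos c_pos
  by (auto simp: indicator_def intro!: mult_nonneg_nonneg besselK_scaled_nonneg)

lemma centre_ge_centre_one: "z \<ge> 1 \<Longrightarrow> centre 1 \<le> centre z"
  using b_less d_less by (simp add: centre_def divide_right_mono)

lemma rate_ge_rate_one: "z \<ge> 1 \<Longrightarrow> rate 1 \<le> rate z"
  using b_less d_less by (simp add: rate_def)

lemma inverse_arguments_le:
  assumes z: "z \<ge> 1" and v: "shift z w > 0"
  shows "1 / (a * (centre z * shift z w)) \<le> 1 / (a * centre 1) * max (shift z w) (1 / shift z w)"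
    and "1 / (c * (z / (centre z * shift z w))) \<le> centre 1 / c * max (shift z w) (1 / shift z w)"
proof -
  let ?v = "shift z w" and ?M = "max (shift z w) (1 / shift z w)"
  have z0: "z > 0" and s: "centre z > 0" and s1: "centre 1 > 0" and s_ge: "centre z \<ge> centre 1"
    using z centre_pos centre_ge_centre_one by auto
  have "1 / (a * (centre z * ?v)) \<le> 1 / (a * centre 1) * (1 / ?v)"
    using a_pos s1 s_ge v by (simp add: field_simps mult_left_mono)
  also have "\<dots> \<le> 1 / (a * centre 1) * ?M" using a_pos s1 by (intro mult_left_mono) auto
  finally show "1 / (a * (centre z * ?v)) \<le> 1 / (a * centre 1) * ?M" .
  have "z / centre z = rate z / (c - d)" "1 / centre 1 = rate 1 / (c - d)"
    using rate_eq_centre(2)[OF z0] rate_eq_centre(2)[of 1] d_less by (auto simp: eq_divide_eq mult.commute)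
  then have zs: "z / centre z \<ge> 1 / centre 1"
    using rate_ge_rate_one[OF z] d_less by (simp add: divide_right_mono)
  have "1 / (c * (z / (centre z * ?v))) = ?v / (c * (z / centre z))"
    using s v z0 c_pos by (simp add: field_simps)
  also have "\<dots> \<le> ?v / (c * (1 / centre 1))"
    using zs c_pos s1 v s z0 by (intro divide_left_mono mult_left_mono) auto
  also have "\<dots> \<le> centre 1 / c * ?M" using c_pos s1 by (simp add: field_simps mult_left_mono)
  finally show "1 / (c * (z / (centre z * ?v))) \<le> centre 1 / c * ?M" .
qed

lemma rescaled_integrand_le:
  assumes C1: "\<And>y. y > 0 \<Longrightarrow> besselK_scaled p y \<le> C1 * (1 + 1 / y) ^ k1" "C1 \<ge> 0"
    and C2: "\<And>y. y > 0 \<Longrightarrow> besselK_scaled q y \<le> C2 * (1 + 1 / y) ^ k2" "C2 \<ge> 0"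
    and z: "z \<ge> 1" "rate z \<ge> 1"
  defines "K \<equiv> nat \<lceil>\<bar>p - q - 1\<bar>\<rceil> + k1 + k2"
  shows "\<bar>rescaled_integrand z w\<bar> \<le> C1 * (1 + 1 / (a * centre 1)) ^ k1 * (C2 * (1 + centre 1 / c) ^ k2)
           * (exp 1 * (2 ^ K + 8 ^ K * fact K)) * ((1 + \<bar>w\<bar> ^ K) * exp (- \<bar>w\<bar>))"
    (is "_ \<le> ?C1 * ?C2 * ?W * ?G")
proof -
  have z0: "z > 0" and s: "centre z > 0" and s1: "centre 1 > 0"
    using z centre_pos by auto
  have C_nonneg: "0 \<le> ?C1 * ?C2 * ?W * ?G"
    using C1(2) C2(2) a_pos c_pos s1 by (intro mult_nonneg_nonneg) auto
  show ?thesis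
  proof (cases "shift z w > 0")
    case False
    then show ?thesis using C_nonneg by (simp add: rescaled_integrand_def)
  next
    case v: True
    let ?v = "shift z w"
    define M where "M = max ?v (1 / ?v)"
    have M: "1 \<le> M" using v by (cases "?v \<ge> 1") (auto simp: M_def le_max_iff_disj le_divide_eq)
    let ?y1 = "a * (centre z * ?v)" and ?y2 = "c * (z / (centre z * ?v))"
    have y: "?y1 > 0" "?y2 > 0" using a_pos c_pos s v z0 by simp_all
    have E1: "besselK_scaled p ?y1 \<le> ?C1 * M ^ k1"
      using besselK_scaled_le_max_power[OF C1 y(1) M] inverse_arguments_le(1)[OF z(1) v] by (simp add: M_def)
    have E2: "besselK_scaled q ?y2 \<le> ?C2 * M ^ k2"
      using besselK_scaled_le_max_power[OF C2 y(2) M] inverse_arguments_le(2)[OF z(1) v] by (simp add: M_def)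
    have P: "?v powr (p - q - 1) \<le> M ^ nat \<lceil>\<bar>p - q - 1\<bar>\<rceil>"
      unfolding M_def by (rule powr_le_max_inverse_power[OF v])
    have "rescaled_integrand z w = ?v powr (p - q - 1) * exp (- (w\<^sup>2 / ?v)) * besselK_scaled p ?y1 * besselK_scaled q ?y2"
      using v by (simp add: rescaled_integrand_def)
    also have "\<dots> \<le> M ^ nat \<lceil>\<bar>p - q - 1\<bar>\<rceil> * exp (- (w\<^sup>2 / ?v)) * (?C1 * M ^ k1) * (?C2 * M ^ k2)"
      using P E1 E2 y M C1(2) C2(2) a_pos c_pos s1
      by (intro mult_mono) (auto intro: besselK_scaled_nonneg)
    also have "\<dots> = ?C1 * ?C2 * (M ^ K * exp (- (w\<^sup>2 / ?v)))"
      by (simp add: K_def power_add algebra_simps)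
    also have "\<dots> \<le> ?C1 * ?C2 * (?W * ?G)"
      unfolding M_def using C1(2) C2(2) s1 c_pos a_pos
      by (intro mult_left_mono max_inverse_power_times_exp_le[OF z(2) shift_def v]) auto
    finally show ?thesis
      using rescaled_integrand_nonneg[OF z0, of w] by (simp add: mult.assoc)
  qed
qed

lemma rescaled_integrand_dominated:
  obtains G where "integrable lborel G" "\<forall>\<^sub>F z in at_top. \<forall>w. \<bar>rescaled_integrand z w\<bar> \<le> G w"
proof -
  obtain C1 k1 where C1: "\<And>y. y > 0 \<Longrightarrow> besselK_scaled p y \<le> C1 * (1 + 1 / y) ^ k1"
    using besselK_scaled_bound by blast
  obtain C2 k2 where C2: "\<And>y. y > 0 \<Longrightarrow> besselK_scaled q y \<le> C2 * (1 + 1 / y) ^ k2"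
    using besselK_scaled_bound by blast
  have "0 \<le> C1 * 2 ^ k1" "0 \<le> C2 * 2 ^ k2"
    using C1[of 1] C2[of 1] besselK_scaled_nonneg[of 1 p] besselK_scaled_nonneg[of 1 q] by simp_all
  then have "C1 \<ge> 0" "C2 \<ge> 0"
    using mult_le_cancel_right_pos[of "2 ^ k1" 0 C1] mult_le_cancel_right_pos[of "2 ^ k2" 0 C2] by simp_all
  let ?K = "nat \<lceil>\<bar>p - q - 1\<bar>\<rceil> + k1 + k2"
  let ?C = "C1 * (1 + 1 / (a * centre 1)) ^ k1 * (C2 * (1 + centre 1 / c) ^ k2)
              * (exp 1 * (2 ^ ?K + 8 ^ ?K * fact ?K))"
  have "filterlim rate at_top at_top"
    unfolding rate_def using b_less d_less by real_asymp
  then have "\<forall>\<^sub>F z in at_top. z \<ge> 1 \<and> rate z \<ge> 1"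
    by (simp add: eventually_conj eventually_ge_at_top filterlim_at_top)
  then have "\<forall>\<^sub>F z in at_top. \<forall>w. \<bar>rescaled_integrand z w\<bar> \<le> ?C * ((1 + \<bar>w\<bar> ^ ?K) * exp (- \<bar>w\<bar>))"
    by eventually_elim (auto intro!: rescaled_integrand_le[OF C1 \<open>C1 \<ge> 0\<close> C2 \<open>C2 \<ge> 0\<close>])
  then show ?thesis
    by (intro that[of "\<lambda>w. ?C * ((1 + \<bar>w\<bar> ^ ?K) * exp (- \<bar>w\<bar>))"])
       (simp_all add: integrable_power_abs_times_exp)
qed

lemma integral_rescaled_integrand_tendsto:
  shows "((\<lambda>z. LINT w|lborel. rescaled_integrand z w) \<longlongrightarrow> sqrt pi * (pi / 2)) at_top"
    and "\<forall>\<^sub>F z in at_top. integrable lborel (rescaled_integrand z)"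
proof -
  obtain G where G: "integrable lborel G" "\<forall>\<^sub>F z in at_top. \<forall>w. \<bar>rescaled_integrand z w\<bar> \<le> G w"
    by (rule rescaled_integrand_dominated)
  have "((\<lambda>z. LINT w|lborel. rescaled_integrand z w) \<longlongrightarrow> (LINT w|lborel. exp (- w\<^sup>2) * (pi / 2))) at_top"
  proof (rule integral_dominated_convergence_at_top[OF _ _ G(1)])
    show "\<forall>\<^sub>F z in at_top. AE w in lborel. norm (rescaled_integrand z w) \<le> G w"
      using G(2) by eventually_elim auto
    show "AE w in lborel. ((\<lambda>z. rescaled_integrand z w) \<longlongrightarrow> exp (- w\<^sup>2) * (pi / 2)) at_top"
      by (intro AE_I2 rescaled_integrand_tendsto)
  qed measurable
  then show "((\<lambda>z. LINT w|lborel. rescaled_integrand z w) \<longlongrightarrow> sqrt pi * (pi / 2)) at_top"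
    using has_bochner_integral_integral_eq[OF has_bochner_integral_gaussian] by simp
  show "\<forall>\<^sub>F z in at_top. integrable lborel (rescaled_integrand z)"
    using G(2) by eventually_elim
      (rule Bochner_Integration.integrable_bound[OF G(1)], auto intro!: AE_I2 order.trans[OF _ abs_ge_self])
qed

lemma prefactor_eq:
  assumes "z > 0"
  shows "sqrt pi * (pi / 2) * prefactor z = pi * sqrt pi / (2 * sqrt (a * c)) * z powr ((2*p + 2*q - 3) / 4)
           * (a - b) powr ((2*q - 2*p - 1) / 4) * (c - d) powr ((2*p - 2*q - 1) / 4)
           * exp (- 2 * sqrt ((a - b) * (c - d) * z))"
proof -
  have "a - b > 0" "c - d > 0" using b_less d_less by simp_all
  then show ?thesis
    using assms a_pos c_pos unfolding prefactor_def centre_def rate_def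
    by (subst ln_inj_iff[symmetric]) (simp_all add: ln_mult ln_div ln_sqrt del: ln_inj_iff, simp add: field_simps)
qed

lemma kernel_integral_asymp:
  "(\<lambda>z. LINT u|lborel. kernel_integrand z u) \<sim>[at_top]
     (\<lambda>z. pi * sqrt pi / (2 * sqrt (a * c)) * z powr ((2*p + 2*q - 3) / 4)
        * (a - b) powr ((2*q - 2*p - 1) / 4) * (c - d) powr ((2*p - 2*q - 1) / 4)
        * exp (- 2 * sqrt ((a - b) * (c - d) * z)))"
proof -
  have "(\<lambda>z. LINT w|lborel. rescaled_integrand z w) \<sim>[at_top] (\<lambda>_. sqrt pi * (pi / 2))"
    by (rule tendsto_imp_asymp_equiv_const[OF integral_rescaled_integrand_tendsto(1)]) simp
  then have "(\<lambda>z. prefactor z * (LINT w|lborel. rescaled_integrand z w))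
               \<sim>[at_top] (\<lambda>z. prefactor z * (sqrt pi * (pi / 2)))"
    by (intro asymp_equiv_intros)
  then show ?thesis
  proof (rule asymp_equiv_transfer)
    show "\<forall>\<^sub>F z in at_top. prefactor z * (LINT w|lborel. rescaled_integrand z w)
            = (LINT u|lborel. kernel_integrand z u)"
      using eventually_gt_at_top[of 0] by eventually_elim (simp add: integral_kernel_integrand_eq)
    show "\<forall>\<^sub>F z in at_top. prefactor z * (sqrt pi * (pi / 2))
            = pi * sqrt pi / (2 * sqrt (a * c)) * z powr ((2*p + 2*q - 3) / 4)
              * (a - b) powr ((2*q - 2*p - 1) / 4) * (c - d) powr ((2*p - 2*q - 1) / 4)
              * exp (- 2 * sqrt ((a - b) * (c - d) * z))"
      using eventually_gt_at_top[of 0] by eventually_elim (metis mult.commute prefactor_eq)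
  qed
qed

lemma eventually_integrable_kernel_integrand:
  "\<forall>\<^sub>F z in at_top. integrable lborel (kernel_integrand z)"
  using integral_rescaled_integrand_tendsto(2) eventually_gt_at_top[of 0]
  by eventually_elim (rule integral_kernel_integrand_eq(2))

end

section \<open>Products of variance-gamma variables\<close>

definition vg_const :: "real \<Rightarrow> real \<Rightarrow> real \<Rightarrow> real" where
  "vg_const \<mu> \<alpha> \<beta> = (\<alpha>\<^sup>2 - \<beta>\<^sup>2) powr (\<mu> + 1/2) / (sqrt pi * (2 * \<alpha>) powr \<mu> * Gamma (\<mu> + 1/2))"

lemma vg_pdf_eq_vg_kernel: "x > 0 \<Longrightarrow> vg_pdf \<mu> \<alpha> \<beta> x = vg_const \<mu> \<alpha> \<beta> * vg_kernel \<mu> \<alpha> \<beta> x"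
  by (simp add: vg_pdf_def vg_const_def vg_kernel_def)

lemma vg_pdf_uminus: "vg_pdf \<mu> \<alpha> \<beta> (- x) = vg_pdf \<mu> \<alpha> (- \<beta>) x"
  by (simp add: vg_pdf_def)

definition vg_product_const :: "real \<Rightarrow> real \<Rightarrow> real \<Rightarrow> real \<Rightarrow> real \<Rightarrow> real \<Rightarrow> real" where
  "vg_product_const m n \<alpha>1 \<beta>1 \<alpha>2 \<beta>2 =
     sqrt pi * sqrt (\<alpha>1\<^sup>2 - \<beta>1\<^sup>2) powr (2*m + 1) * sqrt (\<alpha>2\<^sup>2 - \<beta>2\<^sup>2) powr (2*n + 1) /
       ((2*\<alpha>1) powr (m + 1/2) * (2*\<alpha>2) powr (n + 1/2) * Gamma (m + 1/2) * Gamma (n + 1/2))"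

text \<open>The arguments l1, l2 play the role of the paper's lambda_1^(-+), lambda_2^(-+).\<close>

definition vg_product_tail :: "real \<Rightarrow> real \<Rightarrow> real \<Rightarrow> real \<Rightarrow> real \<Rightarrow> real" where
  "vg_product_tail m n l1 l2 z =
     l1 powr ((2*n - 2*m - 1) / 4) * l2 powr ((2*m - 2*n - 1) / 4) * exp (- 2 * sqrt (l1 * l2 * z))"

lemma vg_const_times_laplace_const:
  assumes "m > -1/2" "n > -1/2" "\<alpha>1 > 0" "\<alpha>2 > 0" "\<bar>\<beta>1\<bar> < \<alpha>1" "\<bar>\<beta>2\<bar> < \<alpha>2"
  shows "vg_const m \<alpha>1 \<beta>1 * vg_const n \<alpha>2 \<beta>2 * (pi * sqrt pi / (2 * sqrt (\<alpha>1 * \<alpha>2)))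
           = vg_product_const m n \<alpha>1 \<beta>1 \<alpha>2 \<beta>2"
proof -
  have "\<alpha>1\<^sup>2 - \<beta>1\<^sup>2 > 0" "\<alpha>2\<^sup>2 - \<beta>2\<^sup>2 > 0"
    using assms abs_le_square_iff[of \<alpha>1 \<beta>1] abs_le_square_iff[of \<alpha>2 \<beta>2] by (auto simp: not_le[symmetric])
  moreover have "Gamma (m + 1/2) > 0" "Gamma (n + 1/2) > 0"
    using Gamma_real_pos[of "m + 1/2"] Gamma_real_pos[of "n + 1/2"] assms(1,2) by simp_all
  ultimately show ?thesis
    using assms unfolding vg_const_def vg_product_const_def
    by (subst ln_inj_iff[symmetric])
       (simp_all add: ln_mult ln_div ln_sqrt del: ln_inj_iff, simp add: field_simps)
qed

lemma vg_product_const_pos: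
  assumes "m > -1/2" "n > -1/2" "\<alpha>1 > 0" "\<alpha>2 > 0"
  shows "vg_product_const m n \<alpha>1 \<beta>1 \<alpha>2 \<beta>2 \<ge> 0"
  using assms Gamma_real_pos[of "m + 1/2"] Gamma_real_pos[of "n + 1/2"]
  unfolding vg_product_const_def by simp

lemma vg_product_const_uminus: "vg_product_const m n \<alpha>1 (- \<beta>1) \<alpha>2 (- \<beta>2) = vg_product_const m n \<alpha>1 \<beta>1 \<alpha>2 \<beta>2"
  by (simp add: vg_product_const_def)

lemma pos_product_integrand_vg_pdf:
  assumes "z > 0"
  shows "pos_product_integrand (vg_pdf m \<alpha>1 \<beta>1) (vg_pdf n \<alpha>2 \<beta>2) z
           = (\<lambda>u. vg_const m \<alpha>1 \<beta>1 * vg_const n \<alpha>2 \<beta>2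
                  * pos_product_integrand (vg_kernel m \<alpha>1 \<beta>1) (vg_kernel n \<alpha>2 \<beta>2) z u)"
proof
  fix u
  show "pos_product_integrand (vg_pdf m \<alpha>1 \<beta>1) (vg_pdf n \<alpha>2 \<beta>2) z u
          = vg_const m \<alpha>1 \<beta>1 * vg_const n \<alpha>2 \<beta>2
            * pos_product_integrand (vg_kernel m \<alpha>1 \<beta>1) (vg_kernel n \<alpha>2 \<beta>2) z u"
    using assms by (cases "u > 0") (simp_all add: pos_product_integrand_def vg_pdf_eq_vg_kernel)
qed

lemma pos_product_vg_pdf_asymp:
  fixes m n \<alpha>1 \<alpha>2 \<beta>1 \<beta>2 :: real
  assumes "m > -1/2" "n > -1/2" "\<alpha>1 > 0" "\<alpha>2 > 0" "\<bar>\<beta>1\<bar> < \<alpha>1" "\<bar>\<beta>2\<bar> < \<alpha>2"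
  shows "(\<lambda>z. LINT u|lborel. pos_product_integrand (vg_pdf m \<alpha>1 \<beta>1) (vg_pdf n \<alpha>2 \<beta>2) z u)
           \<sim>[at_top] (\<lambda>z. vg_product_const m n \<alpha>1 \<beta>1 \<alpha>2 \<beta>2 * z powr ((2*m + 2*n - 3) / 4)
                         * vg_product_tail m n (\<alpha>1 - \<beta>1) (\<alpha>2 - \<beta>2) z)"
    and "\<forall>\<^sub>F z in at_top. integrable lborel (pos_product_integrand (vg_pdf m \<alpha>1 \<beta>1) (vg_pdf n \<alpha>2 \<beta>2) z)"
proof -
  interpret vg_kernel_product m \<alpha>1 \<beta>1 n \<alpha>2 \<beta>2
    using assms by unfold_locales auto
  let ?N = "vg_const m \<alpha>1 \<beta>1 * vg_const n \<alpha>2 \<beta>2"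
  have "(\<lambda>z. ?N * (LINT u|lborel. kernel_integrand z u)) \<sim>[at_top]
          (\<lambda>z. ?N * (pi * sqrt pi / (2 * sqrt (\<alpha>1 * \<alpha>2)) * z powr ((2*m + 2*n - 3) / 4)
            * (\<alpha>1 - \<beta>1) powr ((2*n - 2*m - 1) / 4) * (\<alpha>2 - \<beta>2) powr ((2*m - 2*n - 1) / 4)
            * exp (- 2 * sqrt ((\<alpha>1 - \<beta>1) * (\<alpha>2 - \<beta>2) * z))))"
    by (intro asymp_equiv_intros kernel_integral_asymp)
  then show "(\<lambda>z. LINT u|lborel. pos_product_integrand (vg_pdf m \<alpha>1 \<beta>1) (vg_pdf n \<alpha>2 \<beta>2) z u)
           \<sim>[at_top] (\<lambda>z. vg_product_const m n \<alpha>1 \<beta>1 \<alpha>2 \<beta>2 * z powr ((2*m + 2*n - 3) / 4)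
                         * vg_product_tail m n (\<alpha>1 - \<beta>1) (\<alpha>2 - \<beta>2) z)"
  proof (rule asymp_equiv_transfer)
    show "\<forall>\<^sub>F z in at_top. ?N * (LINT u|lborel. kernel_integrand z u)
            = (LINT u|lborel. pos_product_integrand (vg_pdf m \<alpha>1 \<beta>1) (vg_pdf n \<alpha>2 \<beta>2) z u)"
      using eventually_gt_at_top[of 0] by eventually_elim (simp add: pos_product_integrand_vg_pdf)
  qed (simp add: vg_product_tail_def vg_const_times_laplace_const[OF assms, symmetric] mult_ac)
  show "\<forall>\<^sub>F z in at_top. integrable lborel (pos_product_integrand (vg_pdf m \<alpha>1 \<beta>1) (vg_pdf n \<alpha>2 \<beta>2) z)"
    using eventually_integrable_kernel_integrand eventually_gt_at_top[of 0]
    by eventually_elim (simp add: pos_product_integrand_vg_pdf)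
qed

lemma vg_product_pdf_asymp_at_top:
  fixes m n \<alpha>1 \<alpha>2 \<beta>1 \<beta>2 :: real
  assumes "m > -1/2" "n > -1/2" "\<alpha>1 > 0" "\<alpha>2 > 0" "\<bar>\<beta>1\<bar> < \<alpha>1" "\<bar>\<beta>2\<bar> < \<alpha>2"
  shows "product_pdf (vg_pdf m \<alpha>1 \<beta>1) (vg_pdf n \<alpha>2 \<beta>2) \<sim>[at_top]
           (\<lambda>z. vg_product_const m n \<alpha>1 \<beta>1 \<alpha>2 \<beta>2 * z powr ((2*m + 2*n - 3) / 4)
              * (vg_product_tail m n (\<alpha>1 - \<beta>1) (\<alpha>2 - \<beta>2) z + vg_product_tail m n (\<alpha>1 + \<beta>1) (\<alpha>2 + \<beta>2) z))"
proof -
  let ?C = "vg_product_const m n \<alpha>1 \<beta>1 \<alpha>2 \<beta>2" and ?e = "(2*m + 2*n - 3) / 4"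
  note P1 = pos_product_vg_pdf_asymp[OF assms]
  have "\<bar>- \<beta>1\<bar> < \<alpha>1" "\<bar>- \<beta>2\<bar> < \<alpha>2" using assms(5,6) by simp_all
  note P2 = pos_product_vg_pdf_asymp[OF assms(1-4) this, unfolded vg_product_const_uminus diff_minus_eq_add]
  have nonneg: "\<forall>\<^sub>F z in at_top. ?C * z powr ?e * vg_product_tail m n l1 l2 z \<ge> 0" for l1 l2
    using vg_product_const_pos[OF assms(1-4)] by (simp add: vg_product_tail_def)
  have "(\<lambda>z. (LINT u|lborel. pos_product_integrand (vg_pdf m \<alpha>1 \<beta>1) (vg_pdf n \<alpha>2 \<beta>2) z u)
           + (LINT u|lborel. pos_product_integrand (vg_pdf m \<alpha>1 (- \<beta>1)) (vg_pdf n \<alpha>2 (- \<beta>2)) z u))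
        \<sim>[at_top] (\<lambda>z. ?C * z powr ?e * vg_product_tail m n (\<alpha>1 - \<beta>1) (\<alpha>2 - \<beta>2) z
                      + ?C * z powr ?e * vg_product_tail m n (\<alpha>1 + \<beta>1) (\<alpha>2 + \<beta>2) z)"
    using P1(1) P2(1) nonneg nonneg by (rule asymp_equiv_add_nonneg)
  then show ?thesis
  proof (rule asymp_equiv_transfer)
    show "\<forall>\<^sub>F z in at_top.
            (LINT u|lborel. pos_product_integrand (vg_pdf m \<alpha>1 \<beta>1) (vg_pdf n \<alpha>2 \<beta>2) z u)
            + (LINT u|lborel. pos_product_integrand (vg_pdf m \<alpha>1 (- \<beta>1)) (vg_pdf n \<alpha>2 (- \<beta>2)) z u)
            = product_pdf (vg_pdf m \<alpha>1 \<beta>1) (vg_pdf n \<alpha>2 \<beta>2) z"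
      using P1(2) P2(2) by eventually_elim (simp add: product_pdf_split vg_pdf_uminus)
  qed (simp add: distrib_left)
qed

theorem mainTheorem9:
  fixes m n \<alpha>1 \<alpha>2 \<beta>1 \<beta>2 :: real
  assumes "m > -1/2" "n > -1/2" "\<alpha>1 > 0" "\<alpha>2 > 0"
    "\<bar>\<beta>1\<bar> < \<alpha>1" "\<bar>\<beta>2\<bar> < \<alpha>2"
  defines "l1m \<equiv> \<alpha>1 - \<beta>1" and "l1p \<equiv> \<alpha>1 + \<beta>1"
    and "l2m \<equiv> \<alpha>2 - \<beta>2" and "l2p \<equiv> \<alpha>2 + \<beta>2"
    and "fZ \<equiv> product_pdf (vg_pdf m \<alpha>1 \<beta>1) (vg_pdf n \<alpha>2 \<beta>2)"
    and "D \<equiv> sqrt pi * sqrt (\<alpha>1\<^sup>2 - \<beta>1\<^sup>2) powr (2*m+1) * sqrt (\<alpha>2\<^sup>2 - \<beta>2\<^sup>2) powr (2*n+1) /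
              ((2*\<alpha>1) powr (m+1/2) * (2*\<alpha>2) powr (n+1/2) * Gamma (m+1/2) * Gamma (n+1/2))"
  shows "(fZ \<sim>[at_top] (\<lambda>z. D * z powr ((2*m+2*n-3)/4) *
            (l1m powr ((2*n-2*m-1)/4) * l2m powr ((2*m-2*n-1)/4) * exp (-2 * sqrt (l1m*l2m*z))
           + l1p powr ((2*n-2*m-1)/4) * l2p powr ((2*m-2*n-1)/4) * exp (-2 * sqrt (l1p*l2p*z))))) \<and>
         (
         fZ \<sim>[at_bot] (\<lambda>z. D * (-z) powr ((2*m+2*n-3)/4) *
            (l1m powr ((2*n-2*m-1)/4) * l2p powr ((2*m-2*n-1)/4) * exp (-2 * sqrt (- l1m*l2p*z))
           + l1p powr ((2*n-2*m-1)/4) * l2m powr ((2*m-2*n-1)/4) * exp (-2 * sqrt (- l1p*l2m*z)))))"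
proof -
  have "\<bar>- \<beta>2\<bar> < \<alpha>2" using assms(6) by simp
  note top = vg_product_pdf_asymp_at_top[OF assms(1-6)]
    and bot = vg_product_pdf_asymp_at_top[OF assms(1-5) this]
  show ?thesis
    unfolding at_bot_mirror[where 'a = real] asymp_equiv_filtermap_iff fZ_def product_pdf_uminus
      mult_minus_left minus_mult_minus
    using top bot
    by (simp add: vg_pdf_uminus l1m_def l1p_def l2m_def l2p_def D_def vg_product_const_def
        vg_product_tail_def)
qed

end
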